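(* Let $n$ be a positive integer and let $X,Y$ be two i.i.d. random vectors taking values in $[0,1]^n$. For every $\epsilon\in(0,1]$, $$\mathbb P\Big[\max_{i}|X_i-Y_i|\ge\epsilon\Big]\le1-\Big(\frac{\epsilon}{2}\Big)^n.$$ *)

theory Defs
  imports "HOL-Probability.Probability"
begin

end

theory Submission
  imports Defs
begin

text \<open>Cut \<open>[0,1]\<^sup>n\<close> into \<open>m\<^sup>n\<close> cubes of side \<open>1/m\<close>, where \<open>1/m < \<epsilon> \<le> 2/m\<close>.
  If \<open>X\<close> and \<open>Y\<close> fall into the same cube, all their coordinates differ by at most
  \<open>1/m < \<epsilon>\<close>. For i.i.d. variables the probability of landing in the same cube is
  \<open>\<Sum>\<^sub>k p\<^sub>k\<^sup>2\<close>, where \<open>p\<^sub>k\<close> is the probability of cube \<open>k\<close>, and by Cauchy-Schwarz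
  this is at least \<open>1/m\<^sup>n \<ge> (\<epsilon>/2)\<^sup>n\<close>.\<close>

lemma inverse_card_le_sum_squares:
  fixes p :: "'b \<Rightarrow> real"
  assumes "finite C" "C \<noteq> {}" "sum p C = 1"
  shows "1 / card C \<le> (\<Sum>k\<in>C. (p k)\<^sup>2)"
proof -
  have "1 = (\<Sum>k\<in>C. p k * 1)\<^sup>2" using assms(3) by simp
  also have "\<dots> \<le> (\<Sum>k\<in>C. (p k)\<^sup>2) * card C"
    using Cauchy_Schwarz_ineq_sum[of p "\<lambda>_. 1" C] by simp
  finally show ?thesis
    using assms(1,2) by (simp add: field_simps card_gt_0_iff)
qed

lemma (in prob_space) collision_prob_ge_inverse_card:
  fixes U V :: "'a \<Rightarrow> 'b"
  assumes indep: "indep_var (count_space UNIV) U (count_space UNIV) V"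
    and same_distr: "distr M (count_space UNIV) U = distr M (count_space UNIV) V"
    and C: "finite C" "C \<noteq> {}" and U_in_C: "\<forall>\<omega>\<in>space M. U \<omega> \<in> C"
  shows "1 / card C \<le> prob {\<omega> \<in> space M. U \<omega> = V \<omega>}"
proof -
  have U_meas: "random_variable (count_space UNIV) U"
    and V_meas: "random_variable (count_space UNIV) V"
    using indep_var_rv1[OF indep] indep_var_rv2[OF indep] .
  define p where "p k = prob (U -` {k} \<inter> space M)" for k
  have V_prob: "prob (V -` {k} \<inter> space M) = p k" for k
    using same_distr U_meas V_meas
    by (metis (no_types) measure_distr sets_count_space UNIV_I Pow_UNIV p_def)
  have space_eq: "space M = (\<Union>k\<in>C. U -` {k} \<inter> space M)"
    using U_in_C by blast
  have "prob (space M) = (\<Sum>k\<in>C. p k)"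
    unfolding p_def
    by (subst space_eq, rule finite_measure_finite_Union)
       (use C U_meas in \<open>auto simp: disjoint_family_on_def\<close>)
  then have sum_p: "sum p C = 1"
    by (simp add: prob_space)
  have collision_eq: "{\<omega> \<in> space M. U \<omega> = V \<omega>}
      = (\<Union>k\<in>C. (\<lambda>\<omega>. (U \<omega>, V \<omega>)) -` ({k} \<times> {k}) \<inter> space M)"
    using U_in_C by auto
  have pair_events: "(\<lambda>\<omega>. (U \<omega>, V \<omega>)) -` ({k} \<times> {k}) \<inter> space M \<in> events" for k
  proof -
    have "(\<lambda>\<omega>. (U \<omega>, V \<omega>)) -` ({k} \<times> {k}) \<inter> space M
        = (U -` {k} \<inter> space M) \<inter> (V -` {k} \<inter> space M)"
      by auto
    then show ?thesis
      using U_meas V_meas by (simp add: sets.Int measurable_sets)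
  qed
  have "prob {\<omega> \<in> space M. U \<omega> = V \<omega>}
      = (\<Sum>k\<in>C. prob ((\<lambda>\<omega>. (U \<omega>, V \<omega>)) -` ({k} \<times> {k}) \<inter> space M))"
    unfolding collision_eq
    by (rule finite_measure_finite_Union) (use C pair_events in \<open>auto simp: disjoint_family_on_def\<close>)
  also have "\<dots> = (\<Sum>k\<in>C. (p k)\<^sup>2)"
  proof (rule sum.cong[OF refl])
    show "prob ((\<lambda>\<omega>. (U \<omega>, V \<omega>)) -` ({k} \<times> {k}) \<inter> space M) = (p k)\<^sup>2" for k
      using indep_varD[OF indep, of "{k}" "{k}"] V_prob[of k] by (simp add: p_def power2_eq_square)
  qed
  finally show ?thesis
    using inverse_card_le_sum_squares[OF C sum_p] by simp
qed

lemma (in prob_space) collision_prob_compose_ge_inverse_card: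
  assumes indep: "indep_var N X N Y" and same_distr: "distr M N X = distr M N Y"
    and f: "f \<in> N \<rightarrow>\<^sub>M count_space UNIV"
    and C: "finite C" "C \<noteq> {}" and f_in_C: "\<forall>\<omega>\<in>space M. f (X \<omega>) \<in> C"
  shows "1 / card C \<le> prob {\<omega> \<in> space M. f (X \<omega>) = f (Y \<omega>)}"
proof -
  have "indep_var (count_space UNIV) (f \<circ> X) (count_space UNIV) (f \<circ> Y)"
    using indep_var_compose[OF indep f f] .
  moreover have "distr M (count_space UNIV) (f \<circ> X) = distr M (count_space UNIV) (f \<circ> Y)"
    using distr_distr[OF f indep_var_rv1[OF indep]] distr_distr[OF f indep_var_rv2[OF indep]]
      same_distr by simp
  ultimately show ?thesis
    using collision_prob_ge_inverse_card[of "f \<circ> X" "f \<circ> Y", OF _ _ C] f_in_C by simp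
qed

text \<open>The cap \<open>m - 1\<close> puts the right end point \<open>1\<close> into the last cell.\<close>

definition grid_cell :: "nat \<Rightarrow> real \<Rightarrow> int" where
  "grid_cell m x = min (int m - 1) \<lfloor>real m * x\<rfloor>"

lemma grid_cell_range:
  assumes "1 \<le> m" "x \<in> {0..1}"
  shows "grid_cell m x \<in> {0..int m - 1}"
  using assms by (auto simp: grid_cell_def)

lemma abs_diff_le_if_grid_cell_eq:
  assumes "1 \<le> m" "x \<in> {0..1}" "y \<in> {0..1}" "grid_cell m x = grid_cell m y"
  shows "\<bar>x - y\<bar> \<le> 1 / m"
proof -
  have "\<bar>real m * x - real m * y\<bar> \<le> 1"
  proof (cases "\<lfloor>real m * x\<rfloor> \<ge> int m - 1")
    case True
    moreover have "\<lfloor>real m * y\<rfloor> \<ge> int m - 1"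
      using True assms(4) by (simp add: grid_cell_def min_def split: if_splits)
    ultimately have "real m - 1 \<le> real m * x" "real m - 1 \<le> real m * y"
      by (simp_all add: le_floor_iff)
    moreover have "real m * x \<le> real m" "real m * y \<le> real m"
      using assms(2,3) by (simp_all add: mult_left_le)
    ultimately show ?thesis by linarith
  next
    case False
    then have "\<lfloor>real m * x\<rfloor> = \<lfloor>real m * y\<rfloor>"
      using assms(4) by (auto simp: grid_cell_def min_def split: if_splits)
    then show ?thesis by linarith
  qed
  then have "real m * \<bar>x - y\<bar> \<le> 1"
    by (simp add: abs_mult flip: right_diff_distrib)
  then show ?thesis
    using assms(1) by (simp add: field_simps)
qed

definition grid_cube :: "nat \<Rightarrow> real ^ 'n \<Rightarrow> 'n \<Rightarrow> int" where
  "grid_cube m x = (\<lambda>i. grid_cell m (x $ i))"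

lemma measurable_grid_cube: "grid_cube m \<in> borel \<rightarrow>\<^sub>M count_space UNIV"
  unfolding measurable_count_space_eq2_countable
proof (intro conjI ballI)
  fix a
  have "grid_cube m -` {a} \<inter> space borel
      = {x. \<forall>i. min (int m - 1) \<lfloor>real m * x $ i\<rfloor> = a i}"
    by (auto simp: grid_cube_def grid_cell_def fun_eq_iff)
  also have "\<dots> \<in> sets borel"
    by measurable
  finally show "grid_cube m -` {a} \<inter> space borel \<in> sets borel" .
qed simp

lemma grid_cube_in_PiE:
  assumes "1 \<le> m" "\<forall>i. x $ i \<in> {0..1}"
  shows "grid_cube m x \<in> UNIV \<rightarrow>\<^sub>E {0..int m - 1}"
  using assms grid_cell_range by (auto simp: grid_cube_def)

lemma Max_abs_diff_le_if_grid_cube_eq: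
  assumes "1 \<le> m" "\<forall>i. x $ i \<in> {0..1}" "\<forall>i. y $ i \<in> {0..1}"
    and "grid_cube m x = grid_cube m y"
  shows "(MAX i. \<bar>x $ i - y $ i\<bar>) \<le> 1 / m"
  using assms abs_diff_le_if_grid_cell_eq by (simp add: grid_cube_def fun_eq_iff)

lemma card_grid_cubes: "card ((UNIV :: 'n::finite set) \<rightarrow>\<^sub>E {0..int m - 1}) = m ^ CARD('n)"
  by (simp add: card_PiE)

lemma grid_size_exists:
  assumes "0 < \<epsilon>" "\<epsilon> \<le> 1"
  obtains m :: nat where "1 \<le> m" "1 / m < \<epsilon>" "\<epsilon> / 2 \<le> 1 / m"
proof
  define m where "m = nat \<lfloor>1 / \<epsilon>\<rfloor> + 1"
  have m_eq: "real m = \<lfloor>1 / \<epsilon>\<rfloor> + 1"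
    using assms(1) by (simp add: m_def)
  show "1 \<le> m" by (simp add: m_def)
  have "1 / \<epsilon> < real m" "real m \<le> 1 / \<epsilon> + 1"
    unfolding m_eq by linarith+
  moreover have "1 \<le> 1 / \<epsilon>"
    using assms by simp
  moreover have "0 < real m"
    by (simp add: m_def)
  ultimately show "1 / m < \<epsilon>" "\<epsilon> / 2 \<le> 1 / m"
    using assms(1) by (simp_all add: field_simps)
qed

theorem lemma9:
  fixes M :: "'a measure"
    and X Y :: "'a \<Rightarrow> real ^ 'n"
    and \<epsilon> :: real
  assumes "prob_space M"
    and "X \<in> borel_measurable M" and "Y \<in> borel_measurable M"
    and "prob_space.indep_var M borel X borel Y"
    and "distr M borel X = distr M borel Y"
    and "\<forall>\<omega>\<in>space M. \<forall>i. X \<omega> $ i \<in> {0..1}"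
    and "\<forall>\<omega>\<in>space M. \<forall>i. Y \<omega> $ i \<in> {0..1}"
    and "0 < \<epsilon>" and "\<epsilon> \<le> 1"
  shows "measure M {\<omega> \<in> space M. (MAX i. \<bar>X \<omega> $ i - Y \<omega> $ i\<bar>) \<ge> \<epsilon>}
           \<le> 1 - (\<epsilon> / 2) ^ CARD('n)"
proof -
  interpret prob_space M by fact
  obtain m :: nat where m: "1 \<le> m" "1 / m < \<epsilon>" "\<epsilon> / 2 \<le> 1 / m"
    using grid_size_exists assms(8,9) by blast
  define C where "C = (UNIV :: 'n set) \<rightarrow>\<^sub>E {0..int m - 1}"
  define E where "E = {\<omega> \<in> space M. grid_cube m (X \<omega>) = grid_cube m (Y \<omega>)}"
  have E_events: "E \<in> events"
    unfolding E_def using assms(2,3) measurable_grid_cube by measurable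
  have "1 / card C \<le> prob E"
    unfolding E_def
  proof (rule collision_prob_compose_ge_inverse_card[OF assms(4,5) measurable_grid_cube])
    show "finite C" "C \<noteq> {}"
      using m(1) by (auto simp: C_def PiE_eq_empty_iff intro: finite_PiE)
    show "\<forall>\<omega>\<in>space M. grid_cube m (X \<omega>) \<in> C"
      using assms(6) grid_cube_in_PiE[OF m(1)] unfolding C_def by blast
  qed
  moreover have "(\<epsilon> / 2) ^ CARD('n) \<le> 1 / card C"
  proof -
    have "(\<epsilon> / 2) ^ CARD('n) \<le> (1 / m) ^ CARD('n)"
      using m(3) assms(8) by (intro power_mono) auto
    also have "\<dots> = 1 / card C"
      by (simp add: C_def card_grid_cubes power_one_over)
    finally show ?thesis .
  qed
  moreover have "{\<omega> \<in> space M. (MAX i. \<bar>X \<omega> $ i - Y \<omega> $ i\<bar>) \<ge> \<epsilon>} \<subseteq> space M - E"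
  proof clarify
    fix \<omega> assume \<omega>: "\<omega> \<in> space M" "\<omega> \<in> E"
      and far: "\<epsilon> \<le> (MAX i. \<bar>X \<omega> $ i - Y \<omega> $ i\<bar>)"
    have "(MAX i. \<bar>X \<omega> $ i - Y \<omega> $ i\<bar>) \<le> 1 / m"
      using \<omega> assms(6,7) by (intro Max_abs_diff_le_if_grid_cube_eq[OF m(1)]) (auto simp: E_def)
    then show False
      using far m(2) by linarith
  qed
  then have "measure M {\<omega> \<in> space M. (MAX i. \<bar>X \<omega> $ i - Y \<omega> $ i\<bar>) \<ge> \<epsilon>} \<le> 1 - prob E"
    using finite_measure_mono[OF _ sets.Diff[OF sets.top E_events]] prob_compl[OF E_events]
    by simp
  ultimately show ?thesis
    by linarith
qed

end
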